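(* Suppose $p\in\mathbb{C}[z_1,z_2]$ is semi-stable, $\tilde p/p$ is non-tangentially $C^k$ at a point $\lambda\in\mathbb{T}^2$, and $p$ vanishes to order $M$ at $\lambda$. Then $N_\lambda(p,\tilde p)\ge M(M+k+1)$.
   Context: $\mathbb{D}$ is the open unit disk, $\mathbb{T}$ the unit circle. For $p$ of bidegree $(n,m)$, $\tilde p(z)=z_1^nz_2^m\overline{p(1/\bar z_1,1/\bar z_2)}$; $p$ is semi-stable if it has no zeros in $\mathbb{D}^2$ and $p,\tilde p$ have no common factor. For $\lambda\in\mathbb{T}^2$ and $c>1$ let $\Gamma_c(\lambda)$ be the set of $z\in\mathbb{D}^2$ for which any two of $|z_1-\lambda_1|,|z_2-\lambda_2|,1-|z_1|,1-|z_2|$ have ratio in $[1/c,c]$. A function $f$ on $\mathbb{D}^2$ is non-tangentially $C^k$ at $\lambda$ if there is a polynomial $L$ of degree at most $k$ with $f(z)-L(z-\lambda)=o(|z-\lambda|^k)$ as $z\to\lambda$ in $\Gamma_c(\lambda)$, for every $c>1$. Vanishing to order $M$ at $\lambda$ means the lowest nonzero homogeneous term of the Taylor expansion at $\lambda$ has degree $M$. $N_\lambda(f,g)=\dim_{\mathbb{C}}\mathcal{O}_\lambda/\langle f,g\rangle\mathcal{O}_\lambda$ is the intersection multiplicity ($\mathcal{O}_\lambda$ = rational functions with denominator nonvanishing at $\lambda$). *)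

theory Defs
  imports "HOL-Analysis.Analysis" "HOL-Computational_Algebra.Polynomial_Factorial"
    "HOL-Library.Extended_Nat"
begin

text \<open>Bivariate polynomials in z1, z2 are represented as complex poly poly:
  the outer variable is z2, the coefficients are polynomials in z1.\<close>

type_synonym bipoly = "complex poly poly"

definition eval2 :: "bipoly \<Rightarrow> complex \<times> complex \<Rightarrow> complex" where
  "eval2 P z = poly (map_poly (\<lambda>c. poly c (fst z)) P) (snd z)"

definition deg1 :: "bipoly \<Rightarrow> nat" where
  "deg1 P = Max ((\<lambda>j. degree (coeff P j)) ` {..degree P})"

definition deg2 :: "bipoly \<Rightarrow> nat" where
  "deg2 P = degree P"

definition bcoeff :: "bipoly \<Rightarrow> nat \<Rightarrow> nat \<Rightarrow> complex" where
  "bcoeff P i j = coeff (coeff P j) i"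

text \<open>reflection: tilde p (z) = z1^n z2^m conj(p(1/conj z1, 1/conj z2)), (n,m) the bidegree;
  on coefficients c_{ij} maps to conj c_{n-i,m-j}\<close>
definition refl2 :: "bipoly \<Rightarrow> bipoly" where
  "refl2 P = (\<Sum>i\<le>deg1 P. \<Sum>j\<le>deg2 P.
      monom (monom (cnj (bcoeff P (deg1 P - i) (deg2 P - j))) i) j)"

definition bidisk :: "(complex \<times> complex) set" where
  "bidisk = {z. norm (fst z) < 1 \<and> norm (snd z) < 1}"

definition torus2 :: "(complex \<times> complex) set" where
  "torus2 = {z. norm (fst z) = 1 \<and> norm (snd z) = 1}"

definition semi_stable :: "bipoly \<Rightarrow> bool" where
  "semi_stable P \<longleftrightarrow> (\<forall>z\<in>bidisk. eval2 P z \<noteq> 0) \<and>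
     \<not> (\<exists>q. q dvd P \<and> q dvd refl2 P \<and> \<not> is_unit q)"

definition Gamma :: "real \<Rightarrow> complex \<times> complex \<Rightarrow> (complex \<times> complex) set" where
  "Gamma c lam = {z \<in> bidisk.
     (let q = [norm (fst z - fst lam), norm (snd z - snd lam), 1 - norm (fst z), 1 - norm (snd z)]
      in \<forall>i<4. \<forall>j<4. 1 / c \<le> q ! i / q ! j \<and> q ! i / q ! j \<le> c)}"

definition nt_Ck :: "nat \<Rightarrow> (complex \<times> complex \<Rightarrow> complex) \<Rightarrow> complex \<times> complex \<Rightarrow> bool" where
  "nt_Ck k f lam \<longleftrightarrow> (\<exists>a :: nat \<Rightarrow> nat \<Rightarrow> complex.
     \<forall>c>1. \<forall>e>0. \<forall>\<^sub>F z in at lam within Gamma c lam.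
       norm (f z - (\<Sum>i\<le>k. \<Sum>j\<le>k - i. a i j * (fst z - fst lam) ^ i * (snd z - snd lam) ^ j))
         \<le> e * norm (z - lam) ^ k)"

text \<open>Taylor expansion at lam: the polynomial w \<mapsto> P(lam + w)\<close>
definition shift2 :: "bipoly \<Rightarrow> complex \<times> complex \<Rightarrow> bipoly" where
  "shift2 P lam = pcompose (map_poly (\<lambda>c. pcompose c [:fst lam, 1:]) P) [:[:snd lam:], 1:]"

definition vanishes_to_order :: "bipoly \<Rightarrow> complex \<times> complex \<Rightarrow> nat \<Rightarrow> bool" where
  "vanishes_to_order P lam M \<longleftrightarrow>
     (\<forall>i j. i + j < M \<longrightarrow> bcoeff (shift2 P lam) i j = 0) \<and>
     (\<exists>i j. i + j = M \<and> bcoeff (shift2 P lam) i j \<noteq> 0)"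

text \<open>local ring O_lam: rational functions with denominator nonvanishing at lam
  (considered as germs at lam)\<close>
definition local_ring :: "complex \<times> complex \<Rightarrow> (complex \<times> complex \<Rightarrow> complex) set" where
  "local_ring lam = {f. \<exists>a b. eval2 b lam \<noteq> 0 \<and> (\<forall>z. f z = eval2 a z / eval2 b z)}"

definition in_local_ideal :: "complex \<times> complex \<Rightarrow> bipoly \<Rightarrow> bipoly \<Rightarrow> (complex \<times> complex \<Rightarrow> complex) \<Rightarrow> bool" where
  "in_local_ideal lam P Q f \<longleftrightarrow> (\<exists>g\<in>local_ring lam. \<exists>h\<in>local_ring lam.
     \<forall>\<^sub>F z in nhds lam. f z = g z * eval2 P z + h z * eval2 Q z)"

text \<open>intersection multiplicity: dimension of O_lam / <P,Q> O_lam over C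
  (supremum of sizes of families linearly independent modulo the ideal; possibly infinite)\<close>
definition int_mult :: "complex \<times> complex \<Rightarrow> bipoly \<Rightarrow> bipoly \<Rightarrow> enat" where
  "int_mult lam P Q = Sup {enat n | n. \<exists>fs :: nat \<Rightarrow> complex \<times> complex \<Rightarrow> complex.
      (\<forall>i<n. fs i \<in> local_ring lam) \<and>
      (\<forall>cs :: nat \<Rightarrow> complex. in_local_ideal lam P Q (\<lambda>z. \<Sum>i<n. cs i * fs i z)
          \<longrightarrow> (\<forall>i<n. cs i = 0))}"

end

(*
  Let L be the Taylor polynomial of degree k of p~/p at lam. The remainder R = p~ - L p equals
  p (p~/p - L), the product of a function that is O(|z - lam|^M) and one that is o(|z - lam|^k)
  non-tangentially. Along an open cone of directions entering the bidisk non-tangentially, R is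
  therefore o(|z - lam|^(M + k)), and a polynomial with this property vanishes to order M + k + 1.
  Since p and p~ generate the same local ideal as p and R, it remains to see that polynomials P, Q
  vanishing to orders m, n at a point have intersection multiplicity at least m n. Clearing
  denominators, an element F of the local ideal satisfies B F = A P + A' Q with B a unit at the
  point, so modulo terms of degree m + n it lies in the span of the truncated products x^a P
  (|a| < n) and x^b Q (|b| < m). There are n (n + 1) / 2 + m (m + 1) / 2 of them, which leaves
  m n independent classes among the (m + n) (m + n + 1) / 2 monomials of degree below m + n.
*)

theory Submission
  imports Defs
begin

lemma eval2_conv_poly: "eval2 P z = poly (poly P [:snd z:]) (fst z)"
  unfolding eval2_def
proof (induction P)
  case (pCons a p)
  then show ?case by (simp add: map_poly_pCons)
qed simp

lemma eval2_add [simp]: "eval2 (P + Q) z = eval2 P z + eval2 Q z"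
  and eval2_diff [simp]: "eval2 (P - Q) z = eval2 P z - eval2 Q z"
  and eval2_mult [simp]: "eval2 (P * Q) z = eval2 P z * eval2 Q z"
  and eval2_power [simp]: "eval2 (P ^ n) z = eval2 P z ^ n"
  and eval2_0 [simp]: "eval2 0 z = 0"
  and eval2_1 [simp]: "eval2 1 z = 1"
  and eval2_smult [simp]: "eval2 (smult [:c:] P) z = c * eval2 P z"
  and eval2_monom [simp]: "eval2 (monom (monom c i) j) z = c * fst z ^ i * snd z ^ j"
  by (simp_all add: eval2_conv_poly poly_power poly_monom)

lemma eval2_sum [simp]: "eval2 (sum f A) z = (\<Sum>x\<in>A. eval2 (f x) z)"
  by (induction A rule: infinite_finite_induct) auto

lemma eval2_linear:
  "eval2 [:[:c, 1:]:] z = c + fst z" "eval2 [:[:c:], 1:] z = c + snd z"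
  by (simp_all add: eval2_conv_poly)

lemma eval2_shift2: "eval2 (shift2 P lam) w = eval2 P (lam + w)"
proof (induction P)
  case (pCons a p)
  have "shift2 (pCons a p) lam = [:a \<circ>\<^sub>p [:fst lam, 1:]:] + [:[:snd lam:], 1:] * shift2 p lam"
    by (simp add: shift2_def map_poly_pCons pcompose_pCons)
  then show ?case
    using pCons by (simp add: eval2_conv_poly poly_pcompose algebra_simps)
qed (simp add: shift2_def)

lemma eval2_shift2_uminus: "eval2 (shift2 P (- lam)) z = eval2 P (z - lam)"
  by (simp add: eval2_shift2)

lemma bcoeff_add [simp]: "bcoeff (P + Q) i j = bcoeff P i j + bcoeff Q i j"
  and bcoeff_diff [simp]: "bcoeff (P - Q) i j = bcoeff P i j - bcoeff Q i j"
  and bcoeff_0 [simp]: "bcoeff 0 i j = 0"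
  and bcoeff_smult [simp]: "bcoeff (smult [:c:] P) i j = c * bcoeff P i j"
  and bcoeff_sum: "bcoeff (sum f A) i j = (\<Sum>x\<in>A. bcoeff (f x) i j)"
  and bcoeff_monom: "bcoeff (monom (monom c a) b) i j = (if a = i \<and> b = j then c else 0)"
  and bcoeff_1: "bcoeff 1 i j = (if i = 0 \<and> j = 0 then 1 else 0)"
  and bcoeff_mult: "bcoeff (P * Q) i j = (\<Sum>b\<le>j. \<Sum>a\<le>i. bcoeff P a b * bcoeff Q (i - a) (j - b))"
  by (simp_all add: bcoeff_def coeff_sum coeff_monom coeff_1 coeff_mult)

lemma bcoeff_0_0: "bcoeff P 0 0 = eval2 P 0"
  by (simp add: eval2_conv_poly bcoeff_def poly_0_coeff_0 zero_poly.abs_eq[symmetric])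

lemma bipoly_eqI: "(\<And>i j. bcoeff P i j = bcoeff Q i j) \<Longrightarrow> P = Q"
  unfolding bcoeff_def by (intro poly_eqI) auto

lemma bcoeff_eq_0_beyond_degree:
  assumes "deg1 P < i \<or> deg2 P < j"
  shows "bcoeff P i j = 0"
proof (cases "j \<le> degree P")
  case True
  then have "degree (coeff P j) \<le> deg1 P"
    unfolding deg1_def by (intro Max_ge) auto
  then show ?thesis
    using assms True by (simp add: bcoeff_def deg2_def coeff_eq_0)
qed (simp add: bcoeff_def coeff_eq_0)

lemma bipoly_expansion: "P = (\<Sum>i\<le>deg1 P. \<Sum>j\<le>deg2 P. monom (monom (bcoeff P i j) i) j)"
proof (rule bipoly_eqI)
  fix a b
  have "bcoeff (\<Sum>i\<le>deg1 P. \<Sum>j\<le>deg2 P. monom (monom (bcoeff P i j) i) j) a b =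
      (\<Sum>i\<le>deg1 P. if i = a then (if b \<le> deg2 P then bcoeff P a b else 0) else 0)"
    unfolding bcoeff_sum bcoeff_monom by (intro sum.cong refl) (auto simp: sum.delta)
  also have "\<dots> = bcoeff P a b"
    using bcoeff_eq_0_beyond_degree[of P a b] by (auto simp: sum.delta)
  finally show "bcoeff P a b = bcoeff (\<Sum>i\<le>deg1 P. \<Sum>j\<le>deg2 P. monom (monom (bcoeff P i j) i) j) a b"
    by simp
qed

lemma eval2_expansion:
  "eval2 P z = (\<Sum>i\<le>deg1 P. \<Sum>j\<le>deg2 P. bcoeff P i j * fst z ^ i * snd z ^ j)"
  by (subst bipoly_expansion) simp

lemma isCont_eval2: "isCont (eval2 P) z"
  unfolding eval2_expansion[abs_def] by (intro continuous_intros)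

lemma poly_eq_0_if_vanishes_on_ball:
  fixes p :: "complex poly"
  assumes "r > 0" "\<And>x. norm (x - a) < r \<Longrightarrow> poly p x = 0"
  shows "p = 0"
proof (rule ccontr)
  assume "p \<noteq> 0"
  have "(\<lambda>t. a + of_real t) ` {0<..<r} \<subseteq> {x. poly p x = 0}"
    using assms by auto
  then have "finite ((\<lambda>t. a + of_real t) ` {0<..<r})"
    using poly_roots_finite[OF \<open>p \<noteq> 0\<close>] by (rule finite_subset)
  moreover have "inj_on (\<lambda>t::real. a + of_real t) {0<..<r}"
    by (auto simp: inj_on_def)
  ultimately have "finite {0<..<r}"
    by (rule finite_imageD)
  then show False using assms(1) infinite_Ioo[of 0 r] by simp
qed

lemma bipoly_eq_0_if_vanishes_on_box:
  assumes "r > 0" "\<And>w. norm (fst w - a) < r \<Longrightarrow> norm (snd w - b) < r \<Longrightarrow> eval2 P w = 0"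
  shows "P = 0"
proof -
  have "poly (coeff P j) x = 0" if x: "norm (x - a) < r" for x j
  proof -
    have "map_poly (\<lambda>c. poly c x) P = 0"
      using assms(2)[of "(x, _)"] x by (intro poly_eq_0_if_vanishes_on_ball[OF assms(1)]) (auto simp: eval2_def)
    then have "coeff (map_poly (\<lambda>c. poly c x) P) j = 0" by simp
    then show ?thesis by (simp add: coeff_map_poly)
  qed
  then have "coeff P j = 0" for j
    by (intro poly_eq_0_if_vanishes_on_ball[OF assms(1)])
  then show ?thesis by (intro poly_eqI) simp
qed

lemma bipoly_eq_0_if_eventually_zero:
  assumes "eventually (\<lambda>z. eval2 P z = 0) (nhds a)"
  shows "P = 0"
proof -
  obtain d where "d > 0" and d: "\<And>z. dist z a < d \<Longrightarrow> eval2 P z = 0"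
    using assms unfolding eventually_nhds_metric by auto
  show ?thesis
  proof (rule bipoly_eq_0_if_vanishes_on_box[of "d / 2" "fst a" "snd a"])
    fix w :: "complex \<times> complex"
    assume "norm (fst w - fst a) < d / 2" "norm (snd w - snd a) < d / 2"
    moreover have "dist w a \<le> norm (fst w - fst a) + norm (snd w - snd a)"
      using norm_Pair_le[of "fst w - fst a" "snd w - snd a"] by (metis dist_norm fst_diff snd_diff prod.collapse)
    ultimately show "eval2 P w = 0" by (intro d) auto
  qed (use \<open>d > 0\<close> in auto)
qed

lemma bipoly_eqI_eval2: "(\<And>z. eval2 P z = eval2 Q z) \<Longrightarrow> P = Q"
  using bipoly_eq_0_if_eventually_zero[of "P - Q" 0] by simp

section \<open>Order of vanishing at the origin\<close>

definition vanishes_ge :: "nat \<Rightarrow> bipoly \<Rightarrow> bool" where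
  "vanishes_ge d P \<longleftrightarrow> (\<forall>i j. i + j < d \<longrightarrow> bcoeff P i j = 0)"

lemma vanishes_ge_0 [simp]: "vanishes_ge 0 P"
  and vanishes_ge_zero [simp]: "vanishes_ge d 0"
  by (simp_all add: vanishes_ge_def)

lemma vanishes_ge_mult:
  assumes "vanishes_ge a P" "vanishes_ge b Q"
  shows "vanishes_ge (a + b) (P * Q)"
  unfolding vanishes_ge_def
proof (intro allI impI)
  fix i j assume ij: "i + j < a + b"
  have "bcoeff P a' b' * bcoeff Q (i - a') (j - b') = 0" if "a' \<le> i" "b' \<le> j" for a' b'
  proof (cases "a' + b' < a")
    case False
    then have "(i - a') + (j - b') < b" using ij that by linarith
    then show ?thesis using assms(2) by (simp add: vanishes_ge_def)
  qed (use assms(1) in \<open>simp add: vanishes_ge_def\<close>)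
  then show "bcoeff (P * Q) i j = 0"
    unfolding bcoeff_mult by (intro sum.neutral ballI) auto
qed

lemma vanishes_ge_power: "vanishes_ge 1 X \<Longrightarrow> vanishes_ge n (X ^ n)"
  by (induction n) (auto dest: vanishes_ge_mult)

lemma vanishes_to_order_imp_vanishes_ge:
  "vanishes_to_order P lam M \<Longrightarrow> vanishes_ge M (shift2 P lam)"
  by (simp add: vanishes_to_order_def vanishes_ge_def)

lemma norm_eval2_le_if_vanishes_ge:
  assumes "vanishes_ge d P"
  obtains K where "0 \<le> K" "\<And>w. norm w \<le> 1 \<Longrightarrow> norm (eval2 P w) \<le> K * norm w ^ d"
proof
  define K where "K = (\<Sum>i\<le>deg1 P. \<Sum>j\<le>deg2 P. norm (bcoeff P i j))"
  show "0 \<le> K" by (simp add: K_def sum_nonneg)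
  fix w :: "complex \<times> complex" assume w: "norm w \<le> 1"
  have term_le: "norm (bcoeff P i j * fst w ^ i * snd w ^ j) \<le> norm (bcoeff P i j) * norm w ^ d"
    for i j
  proof (cases "i + j < d")
    case False
    have "norm (fst w) \<le> norm w" "norm (snd w) \<le> norm w"
      using norm_fst_le[of "fst w" "snd w"] norm_snd_le[of "snd w" "fst w"] by simp_all
    then have "norm (fst w) ^ i * norm (snd w) ^ j \<le> norm w ^ i * norm w ^ j"
      by (intro mult_mono power_mono) auto
    also have "\<dots> \<le> norm w ^ d"
      unfolding power_add[symmetric] using False w by (intro power_decreasing) auto
    finally show ?thesis
      by (simp add: norm_mult norm_power mult.assoc mult_left_mono)
  qed (use assms in \<open>simp add: vanishes_ge_def\<close>)
  have "norm (eval2 P w) \<le> (\<Sum>i\<le>deg1 P. \<Sum>j\<le>deg2 P. norm (bcoeff P i j * fst w ^ i * snd w ^ j))"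
    unfolding eval2_expansion by (intro order.trans[OF norm_sum] sum_mono norm_sum)
  also have "\<dots> \<le> K * norm w ^ d"
    unfolding K_def sum_distrib_right by (intro sum_mono term_le)
  finally show "norm (eval2 P w) \<le> K * norm w ^ d" .
qed

definition exps_below :: "nat \<Rightarrow> (nat \<times> nat) set" where
  "exps_below D = {(i, j). i + j < D}"

lemma finite_exps_below [simp]: "finite (exps_below D)"
  by (rule finite_subset[of _ "{..<D} \<times> {..<D}"]) (auto simp: exps_below_def)

lemma card_exps_below: "2 * card (exps_below D) = D * (D + 1)"
proof (induction D)
  case (Suc D)
  have "exps_below (Suc D) = exps_below D \<union> (\<lambda>i. (i, D - i)) ` {..D}"
    by (auto simp: exps_below_def image_iff)
  moreover have "exps_below D \<inter> (\<lambda>i. (i, D - i)) ` {..D} = {}"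
    by (auto simp: exps_below_def)
  moreover have "inj_on (\<lambda>i. (i, D - i)) {..D}"
    by (auto simp: inj_on_def)
  ultimately have "card (exps_below (Suc D)) = card (exps_below D) + Suc D"
    by (simp add: card_Un_disjoint card_image)
  then show ?case using Suc by simp
qed (simp add: exps_below_def)

lemma card_exps_below_add:
  "card (exps_below (m + n)) = card (exps_below m) + card (exps_below n) + m * n"
proof -
  have "(m + n) * (m + n + 1) = m * (m + 1) + n * (n + 1) + 2 * (m * n)"
    by (simp add: algebra_simps)
  then show ?thesis
    using card_exps_below[of "m + n"] card_exps_below[of m] card_exps_below[of n] by simp
qed

definition trunc_deg :: "nat \<Rightarrow> bipoly \<Rightarrow> bipoly" where
  "trunc_deg D P = (\<Sum>(i, j)\<in>exps_below D. monom (monom (bcoeff P i j) i) j)"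

lemma bcoeff_trunc_deg: "bcoeff (trunc_deg D P) a b = (if a + b < D then bcoeff P a b else 0)"
proof -
  have "bcoeff (trunc_deg D P) a b = (\<Sum>x\<in>exps_below D. if x = (a, b) then bcoeff P a b else 0)"
    unfolding trunc_deg_def bcoeff_sum
    by (intro sum.cong refl) (auto simp: bcoeff_monom split: if_split_asm)
  then show ?thesis
    by (simp only: sum.delta[OF finite_exps_below]) (simp add: exps_below_def)
qed

lemma trunc_deg_add: "trunc_deg D (P + Q) = trunc_deg D P + trunc_deg D Q"
  and trunc_deg_smult: "trunc_deg D (smult [:c:] P) = smult [:c:] (trunc_deg D P)"
  and trunc_deg_sum: "trunc_deg D (sum f A) = (\<Sum>x\<in>A. trunc_deg D (f x))"
  by (rule bipoly_eqI; simp add: bcoeff_trunc_deg bcoeff_sum)+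

lemma trunc_deg_eq_0: "vanishes_ge D P \<Longrightarrow> trunc_deg D P = 0"
  by (rule bipoly_eqI) (simp add: bcoeff_trunc_deg vanishes_ge_def)

lemma trunc_deg_id: "(\<And>i j. D \<le> i + j \<Longrightarrow> bcoeff P i j = 0) \<Longrightarrow> trunc_deg D P = P"
  by (rule bipoly_eqI) (simp add: bcoeff_trunc_deg)

lemma vanishes_ge_diff_trunc_deg: "vanishes_ge D (P - trunc_deg D P)"
  by (simp add: vanishes_ge_def bcoeff_trunc_deg)

definition homog_part :: "nat \<Rightarrow> bipoly \<Rightarrow> bipoly" where
  "homog_part d P = (\<Sum>i\<le>d. monom (monom (bcoeff P i (d - i)) i) (d - i))"

lemma bcoeff_homog_part: "bcoeff (homog_part d P) a b = (if a + b = d then bcoeff P a b else 0)"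
proof -
  have "bcoeff (homog_part d P) a b =
      (\<Sum>i\<le>d. if i = a then (if a + b = d then bcoeff P a b else 0) else 0)"
    unfolding homog_part_def bcoeff_sum by (intro sum.cong refl) (auto simp: bcoeff_monom)
  then show ?thesis by simp
qed

lemma vanishes_ge_diff_homog_part: "vanishes_ge d P \<Longrightarrow> vanishes_ge (Suc d) (P - homog_part d P)"
  by (auto simp: vanishes_ge_def bcoeff_homog_part)

lemma eval2_homog_part_scaleR:
  "eval2 (homog_part d P) (t *\<^sub>R w) = of_real t ^ d * eval2 (homog_part d P) w"
proof -
  have "(of_real t * fst w) ^ i * (of_real t * snd w) ^ (d - i) =
      of_real t ^ d * (fst w ^ i * snd w ^ (d - i))" if "i \<le> d" for i
    using that by (simp add: power_mult_distrib power_add[symmetric] algebra_simps)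
  then show ?thesis
    by (simp add: homog_part_def sum_distrib_left scaleR_conv_of_real mult.assoc
        mult.left_commute[of _ "of_real t ^ d"])
qed

lemma shifted_poly_in_local_ring: "(\<lambda>z. eval2 F (z - lam)) \<in> local_ring lam"
  unfolding local_ring_def
  by (intro CollectI exI[of _ "shift2 F (- lam)"] exI[of _ 1]) (simp add: eval2_shift2_uminus)

lemma eventually_eval2_nonzero: "eval2 b lam \<noteq> 0 \<Longrightarrow> eventually (\<lambda>z. eval2 b z \<noteq> 0) (nhds lam)"
  unfolding eventually_nhds_conv_at using tendsto_imp_eventually_ne[OF isContD[OF isCont_eval2]] by auto

lemma in_local_ideal_imp_relation:
  assumes "in_local_ideal lam P Q (\<lambda>z. eval2 F (z - lam))"
  obtains B A A' where "bcoeff B 0 0 \<noteq> 0" "B * F = A * shift2 P lam + A' * shift2 Q lam"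
proof -
  obtain g h where g: "g \<in> local_ring lam" and h: "h \<in> local_ring lam"
    and ev: "eventually (\<lambda>z. eval2 F (z - lam) = g z * eval2 P z + h z * eval2 Q z) (nhds lam)"
    using assms unfolding in_local_ideal_def by blast
  obtain a b where b: "eval2 b lam \<noteq> 0" and g_eq: "\<And>z. g z = eval2 a z / eval2 b z"
    using g unfolding local_ring_def by blast
  obtain a' b' where b': "eval2 b' lam \<noteq> 0" and h_eq: "\<And>z. h z = eval2 a' z / eval2 b' z"
    using h unfolding local_ring_def by blast
  define E where "E = b * b' * shift2 F (- lam) - a * b' * P - a' * b * Q"
  have "eventually (\<lambda>z. eval2 E z = 0) (nhds lam)"
    using ev eventually_eval2_nonzero[OF b] eventually_eval2_nonzero[OF b']
    by eventually_elim (simp add: E_def eval2_shift2_uminus g_eq h_eq field_simps)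
  then have "E = 0" by (rule bipoly_eq_0_if_eventually_zero)
  show ?thesis
  proof
    show "bcoeff (shift2 (b * b') lam) 0 0 \<noteq> 0"
      using b b' by (simp add: bcoeff_0_0 eval2_shift2)
    show "shift2 (b * b') lam * F = shift2 (a * b') lam * shift2 P lam + shift2 (a' * b) lam * shift2 Q lam"
    proof (rule bipoly_eqI_eval2)
      fix w
      have "eval2 E (lam + w) = 0" using \<open>E = 0\<close> by simp
      then show "eval2 (shift2 (b * b') lam * F) w =
          eval2 (shift2 (a * b') lam * shift2 P lam + shift2 (a' * b) lam * shift2 Q lam) w"
        by (simp add: E_def eval2_shift2 algebra_simps)
    qed
  qed
qed

lemma in_local_ideal_add_multiple:
  assumes "in_local_ideal lam P (R + L * P) F"
  shows "in_local_ideal lam P R F"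
proof -
  obtain g h where g: "g \<in> local_ring lam" and h: "h \<in> local_ring lam"
    and ev: "eventually (\<lambda>z. F z = g z * eval2 P z + h z * eval2 (R + L * P) z) (nhds lam)"
    using assms unfolding in_local_ideal_def by blast
  obtain a b where b: "eval2 b lam \<noteq> 0" and g_eq: "\<And>z. g z = eval2 a z / eval2 b z"
    using g unfolding local_ring_def by blast
  obtain a' b' where b': "eval2 b' lam \<noteq> 0" and h_eq: "\<And>z. h z = eval2 a' z / eval2 b' z"
    using h unfolding local_ring_def by blast
  let ?g = "\<lambda>z. eval2 (a * b' + a' * L * b) z / eval2 (b * b') z"
  have g': "?g \<in> local_ring lam"
    using b b' unfolding local_ring_def
    by (intro CollectI exI[of _ "a * b' + a' * L * b"] exI[of _ "b * b'"]) simp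
  have "eventually (\<lambda>z. F z = ?g z * eval2 P z + h z * eval2 R z) (nhds lam)"
    using ev eventually_eval2_nonzero[OF b] eventually_eval2_nonzero[OF b']
    by eventually_elim (simp add: g_eq h_eq field_simps)
  then show ?thesis
    unfolding in_local_ideal_def using g' h by (intro bexI)
qed

lemma int_mult_mono:
  assumes "\<And>F. in_local_ideal lam P Q' F \<Longrightarrow> in_local_ideal lam P Q F"
  shows "int_mult lam P Q \<le> int_mult lam P Q'"
  unfolding int_mult_def by (intro Sup_subset_mono subsetI) (use assms in blast)

section \<open>Intersection multiplicity of polynomials with prescribed orders of vanishing\<close>

lemma (in vector_space) independent_subset_span_disjoint:
  assumes "finite G" "finite V" "independent V"
  obtains S where "S \<subseteq> V" "card V \<le> card S + card G" "independent S" "span S \<inter> span G \<subseteq> {0}"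
proof -
  obtain W where W: "W \<subseteq> G" "independent W" "G \<subseteq> span W"
    by (rule maximal_independent_subset)
  obtain B where B: "W \<subseteq> B" "B \<subseteq> W \<union> V" "independent B" "W \<union> V \<subseteq> span B"
    using maximal_independent_subset_extend[of W "W \<union> V"] W(2) by blast
  have fin_W: "finite W"
    using finite_subset[OF W(1) assms(1)] .
  have fin_B: "finite B"
    using finite_subset[OF B(2)] fin_W assms(2) by blast
  show ?thesis
  proof
    show "B - W \<subseteq> V" using B(2) by blast
    have "card V \<le> card B"
      using independent_span_bound[OF fin_B assms(3)] B(4) by blast
    also have "card B = card (B - W) + card W"
      using card_Diff_subset[OF fin_W B(1)] card_mono[OF fin_B B(1)] by simp
    also have "card W \<le> card G"
      using card_mono[OF assms(1) W(1)] .
    finally show "card V \<le> card (B - W) + card G" by simp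
    show "independent (B - W)"
      using B(3) independent_mono by blast
    show "span (B - W) \<inter> span G \<subseteq> {0}"
    proof
      fix x assume x: "x \<in> span (B - W) \<inter> span G"
      have "span G \<subseteq> span W"
        using W(3) span_mono span_span by blast
      then have "x \<in> range (\<lambda>w. \<Sum>v\<in>W. scale (w v) v)"
        using x span_finite[OF fin_W] by blast
      then obtain w where w: "x = (\<Sum>v\<in>W. scale (w v) v)"
        by blast
      have "x \<in> range (\<lambda>u. \<Sum>v\<in>B - W. scale (u v) v)"
        using x span_finite[of "B - W"] fin_B by blast
      then obtain u where u: "x = (\<Sum>v\<in>B - W. scale (u v) v)"
        by blast
      let ?c = "\<lambda>v. if v \<in> W then - w v else u v"
      have "(\<Sum>v\<in>B. scale (?c v) v) = (\<Sum>v\<in>B - W. scale (?c v) v) + (\<Sum>v\<in>W. scale (?c v) v)"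
        using sum.subset_diff[OF B(1) fin_B] .
      also have "\<dots> = x + - x"
      proof (rule arg_cong2[where f = "(+)"])
        show "(\<Sum>v\<in>B - W. scale (?c v) v) = x"
          unfolding u by (intro sum.cong) auto
        show "(\<Sum>v\<in>W. scale (?c v) v) = - x"
          unfolding w by (simp add: scale_minus_left sum_negf)
      qed
      finally have sum_0: "(\<Sum>v\<in>B. scale (?c v) v) = 0"
        by simp
      have "?c v = 0" if "v \<in> B" for v
        using B(3)[unfolded independent_explicit_finite_subsets, rule_format, OF order_refl fin_B sum_0 that] .
      then have "\<forall>v\<in>B - W. u v = 0"
        by (metis DiffE)
      then show "x \<in> {0}"
        unfolding u by (simp add: sum.neutral)
    qed
  qed
qed

lemma (in vector_space) independent_family_scalars_zero:
  assumes "independent S" "f ` A \<subseteq> S" "inj_on f A" "finite A"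
    and "(\<Sum>i\<in>A. scale (c i) (f i)) = 0" "i \<in> A"
  shows "c i = 0"
proof -
  let ?d = "\<lambda>v. c (the_inv_into A f v)"
  have ind: "\<And>T u v. T \<subseteq> S \<Longrightarrow> finite T \<Longrightarrow> (\<Sum>v\<in>T. scale (u v) v) = 0 \<Longrightarrow> v \<in> T \<Longrightarrow> u v = 0"
    using assms(1) unfolding independent_explicit_finite_subsets by blast
  have "(\<Sum>v\<in>f ` A. scale (?d v) v) = (\<Sum>i\<in>A. scale (c i) (f i))"
    unfolding sum.reindex[OF assms(3)] by (intro sum.cong) (auto simp: the_inv_into_f_f[OF assms(3)])
  then have "(\<Sum>v\<in>f ` A. scale (?d v) v) = 0"
    using assms(5) by simp
  from ind[OF assms(2) finite_imageI[OF assms(4)] this imageI[OF assms(6)]]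
  show ?thesis
    by (simp add: the_inv_into_f_f[OF assms(3) assms(6)])
qed

interpretation bipoly_space: vector_space "\<lambda>c (P :: bipoly). smult [:c:] P"
proof
  fix a b :: complex and P Q :: bipoly
  show "smult [:a:] (P + Q) = smult [:a:] P + smult [:a:] Q"
    by (rule smult_add_right)
  have "[:a + b:] = [:a:] + [:b:]" by simp
  then show "smult [:a + b:] P = smult [:a:] P + smult [:b:] P"
    by (simp only: smult_add_left)
  have "[:a * b:] = [:a:] * [:b:]" by simp
  then show "smult [:a:] (smult [:b:] P) = smult [:a * b:] P"
    by (simp only: smult_smult)
  show "smult [:1:] P = P"
    by (simp flip: one_pCons)
qed

lemma independent_monomials:
  "bipoly_space.independent ((\<lambda>(i, j). monom (monom 1 i) j) ` A)"
  unfolding bipoly_space.independent_explicit_finite_subsets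
proof (intro allI impI ballI)
  fix T :: "bipoly set" and u v
  assume T: "T \<subseteq> (\<lambda>(i, j). monom (monom 1 i) j) ` A" "finite T"
    and sum_0: "(\<Sum>v\<in>T. smult [:u v:] v) = 0" and v: "v \<in> T"
  obtain i j where v_eq: "v = monom (monom 1 i) j"
    using v T(1) by auto
  have coeff_v': "bcoeff v' i j = (if v' = v then 1 else 0)" if "v' \<in> T" for v'
    using that T(1) by (auto simp: v_eq bcoeff_monom monom_eq_iff)
  have "bcoeff (\<Sum>v\<in>T. smult [:u v:] v) i j = (\<Sum>v'\<in>T. if v' = v then u v' else 0)"
    unfolding bcoeff_sum by (intro sum.cong refl) (simp add: coeff_v')
  also have "\<dots> = u v"
    using T(2) v by simp
  finally show "u v = 0"
    using sum_0 by simp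
qed

lemma monom_monom_eq_smult: "monom (monom (c :: complex) i) j = smult [:c:] (monom (monom 1 i) j)"
  by (rule bipoly_eqI) (simp add: bcoeff_monom)

lemma monom_monom_1_eq_iff:
  "monom (monom (1 :: complex) a) b = monom (monom 1 i) j \<longleftrightarrow> a = i \<and> b = j"
  by (metis bcoeff_monom one_neq_zero)

definition trunc_multiples :: "nat \<Rightarrow> nat \<Rightarrow> bipoly \<Rightarrow> bipoly set" where
  "trunc_multiples D n P = (\<lambda>(i, j). trunc_deg D (monom (monom 1 i) j * P)) ` exps_below n"

lemma trunc_deg_mult_in_span:
  assumes "vanishes_ge m P"
  shows "trunc_deg (m + n) (A * P) \<in> bipoly_space.span (trunc_multiples (m + n) n P)"
proof -
  have "vanishes_ge (n + m) ((A - trunc_deg n A) * P)"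
    by (rule vanishes_ge_mult[OF vanishes_ge_diff_trunc_deg assms])
  then have "trunc_deg (m + n) ((A - trunc_deg n A) * P) = 0"
    by (simp add: trunc_deg_eq_0 add.commute)
  moreover have "A * P = trunc_deg n A * P + (A - trunc_deg n A) * P"
    by (simp add: algebra_simps)
  ultimately have "trunc_deg (m + n) (A * P) = trunc_deg (m + n) (trunc_deg n A * P)"
    by (metis add.right_neutral trunc_deg_add)
  also have "trunc_deg n A * P = (\<Sum>(i, j)\<in>exps_below n. smult [:bcoeff A i j:] (monom (monom 1 i) j * P))"
    unfolding trunc_deg_def sum_distrib_right
    by (intro sum.cong refl) (auto simp: monom_monom_eq_smult[of "bcoeff A _ _"])
  also have "trunc_deg (m + n) \<dots> =
      (\<Sum>(i, j)\<in>exps_below n. smult [:bcoeff A i j:] (trunc_deg (m + n) (monom (monom 1 i) j * P)))"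
    unfolding trunc_deg_sum by (intro sum.cong refl) (auto simp: trunc_deg_smult)
  also have "\<dots> \<in> bipoly_space.span (trunc_multiples (m + n) n P)"
    unfolding trunc_multiples_def
    by (intro bipoly_space.span_sum) (auto intro!: bipoly_space.span_scale intro: bipoly_space.span_base)
  finally show ?thesis .
qed

text \<open>The geometric series in \<open>1 - B / B(0)\<close> inverts \<open>B\<close> modulo terms of high degree.\<close>

lemma exists_inverse_mod_degree:
  assumes "bcoeff B 0 0 \<noteq> 0"
  obtains V where "vanishes_ge D (1 - B * V)"
proof
  define X where "X = 1 - smult [:1 / bcoeff B 0 0:] B"
  have "vanishes_ge 1 X"
    using assms by (auto simp: vanishes_ge_def X_def bcoeff_1)
  moreover have "B * smult [:1 / bcoeff B 0 0:] (\<Sum>i<D. X ^ i) = (1 - X) * (\<Sum>i<D. X ^ i)"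
    by (simp add: X_def)
  then have "1 - B * smult [:1 / bcoeff B 0 0:] (\<Sum>i<D. X ^ i) = X ^ D"
    by (simp flip: one_diff_power_eq)
  ultimately show "vanishes_ge D (1 - B * smult [:1 / bcoeff B 0 0:] (\<Sum>i<D. X ^ i))"
    by (simp add: vanishes_ge_power)
qed

lemma in_span_trunc_multiples_if_relation:
  assumes "bcoeff B 0 0 \<noteq> 0" "B * F = A * P + A' * Q"
    and P: "vanishes_ge m P" and Q: "vanishes_ge n Q" and F: "trunc_deg (m + n) F = F"
  shows "F \<in> bipoly_space.span (trunc_multiples (m + n) n P \<union> trunc_multiples (m + n) m Q)"
proof -
  obtain V where V: "vanishes_ge (m + n) (1 - B * V)"
    using exists_inverse_mod_degree[OF assms(1)] .
  have "F = (V * A) * P + (V * A') * Q + (1 - B * V) * F"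
    using arg_cong[OF assms(2), of "(*) V"] by (simp add: algebra_simps)
  then have "trunc_deg (m + n) F =
      trunc_deg (m + n) ((V * A) * P) + trunc_deg (m + n) ((V * A') * Q) + trunc_deg (m + n) ((1 - B * V) * F)"
    by (metis trunc_deg_add)
  moreover have "trunc_deg (m + n) ((1 - B * V) * F) = 0"
    using vanishes_ge_mult[OF V vanishes_ge_0] by (simp add: trunc_deg_eq_0)
  ultimately have "F = trunc_deg (m + n) ((V * A) * P) + trunc_deg (n + m) ((V * A') * Q)"
    using F by (simp add: add.commute)
  also have "\<dots> \<in> bipoly_space.span (trunc_multiples (m + n) n P \<union> trunc_multiples (m + n) m Q)"
    using trunc_deg_mult_in_span[OF P, of n] trunc_deg_mult_in_span[OF Q, of m]
    by (intro bipoly_space.span_add) (auto simp: add.commute intro: bipoly_space.span_mono[THEN subsetD])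
  finally show ?thesis .
qed

lemma trunc_deg_span_monomials:
  assumes "F \<in> bipoly_space.span ((\<lambda>(i, j). monom (monom 1 i) j) ` exps_below D)"
  shows "trunc_deg D F = F"
  using assms
proof (induction rule: bipoly_space.span_induct_alt)
  case (step c x F)
  then obtain i j where "(i, j) \<in> exps_below D" "x = monom (monom 1 i) j"
    by auto
  then have "trunc_deg D x = x"
    by (intro trunc_deg_id) (auto simp: exps_below_def bcoeff_monom)
  then show ?case
    using step by (simp add: trunc_deg_add trunc_deg_smult)
qed (simp add: trunc_deg_eq_0)

theorem int_mult_ge_mult_orders:
  assumes P: "vanishes_ge m (shift2 P lam)" and Q: "vanishes_ge n (shift2 Q lam)"
  shows "enat (m * n) \<le> int_mult lam P Q"
proof -
  define G where "G = trunc_multiples (m + n) n (shift2 P lam) \<union> trunc_multiples (m + n) m (shift2 Q lam)"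
  define V where "V = (\<lambda>(i, j). monom (monom (1 :: complex) i) j) ` exps_below (m + n)"
  have "card G \<le> card (exps_below n) + card (exps_below m)"
    unfolding G_def trunc_multiples_def by (intro card_Un_le[THEN order_trans] add_mono card_image_le) auto
  moreover have "card V = card (exps_below (m + n))"
    unfolding V_def by (rule card_image) (auto simp: inj_on_def monom_monom_1_eq_iff)
  moreover obtain S where S: "S \<subseteq> V" "card V \<le> card S + card G" "bipoly_space.independent S"
    "bipoly_space.span S \<inter> bipoly_space.span G \<subseteq> {0}"
    by (rule bipoly_space.independent_subset_span_disjoint[of G V])
      (auto simp: G_def trunc_multiples_def V_def independent_monomials)
  ultimately have "m * n \<le> card S"
    using card_exps_below_add[of m n] by simp
  moreover have fin_S: "finite S"
    using S(1) by (rule finite_subset) (simp add: V_def)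
  ultimately obtain h where h: "h ` {..<m * n} \<subseteq> S" "inj_on h {..<m * n}"
    using card_le_inj[of "{..<m * n}" S] by auto
  let ?fs = "\<lambda>i z. eval2 (h i) (z - lam)"
  have scalars_zero: "cs i = 0"
    if ideal: "in_local_ideal lam P Q (\<lambda>z. \<Sum>i<m * n. cs i * ?fs i z)" and "i < m * n" for cs i
  proof -
    define F where "F = (\<Sum>i<m * n. smult [:cs i:] (h i))"
    have F_span: "F \<in> bipoly_space.span S"
      unfolding F_def using h(1) by (intro bipoly_space.span_sum bipoly_space.span_scale bipoly_space.span_base) auto
    have "in_local_ideal lam P Q (\<lambda>z. eval2 F (z - lam))"
      using ideal by (simp add: F_def)
    then obtain B A A' where "bcoeff B 0 0 \<noteq> 0" "B * F = A * shift2 P lam + A' * shift2 Q lam"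
      by (rule in_local_ideal_imp_relation)
    moreover have "trunc_deg (m + n) F = F"
      using F_span S(1) bipoly_space.span_mono[of S V] by (intro trunc_deg_span_monomials) (auto simp: V_def)
    ultimately have "F \<in> bipoly_space.span G"
      unfolding G_def by (rule in_span_trunc_multiples_if_relation[OF _ _ P Q])
    then have "F \<in> {0}"
      using F_span by (intro subsetD[OF S(4)] IntI)
    then show "cs i = 0"
      using \<open>i < m * n\<close>
      by (intro bipoly_space.independent_family_scalars_zero[OF S(3) h(1) h(2)]) (auto simp: F_def)
  qed
  show ?thesis
    unfolding int_mult_def
    by (intro Sup_upper CollectI exI[of _ "m * n"] conjI refl exI[of _ ?fs] allI impI
        shifted_poly_in_local_ring scalars_zero)
qed

section \<open>Non-tangential approach along a cone of directions\<close>

lemma norm_add_scaled_bounds: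
  fixes l v :: complex
  assumes "norm l = 1" "0 \<le> t" "t \<le> 1" "norm (v + l) < 1/10"
  shows "9/10 * t \<le> 1 - norm (l + of_real t * v)" "1 - norm (l + of_real t * v) \<le> 11/10 * t"
proof -
  have eq: "l + of_real t * v = of_real (1 - t) * l + of_real t * (v + l)"
    by (simp add: algebra_simps)
  have "t * norm (v + l) \<le> t * (1/10)"
    using assms(2,4) by (intro mult_left_mono) auto
  then have "norm (of_real t * (v + l)) \<le> t / 10"
    using assms(2) by (simp add: norm_mult)
  moreover have "norm (of_real (1 - t) * l) = 1 - t"
    using assms(1,3) by (simp add: norm_mult del: of_real_diff)
  ultimately show "9/10 * t \<le> 1 - norm (l + of_real t * v)" "1 - norm (l + of_real t * v) \<le> 11/10 * t"
    unfolding eq using norm_triangle_ineq[of "of_real (1 - t) * l" "of_real t * (v + l)"]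
      norm_diff_ineq[of "of_real (1 - t) * l" "of_real t * (v + l)"] by auto
qed

lemma norm_near_unit_bounds:
  fixes l v :: complex
  assumes "norm l = 1" "norm (v + l) < 1/10"
  shows "9/10 < norm v" "norm v < 11/10"
  using assms norm_triangle_ineq4[of "v + l" l] norm_triangle_ineq4[of "v + l" v] by auto

text \<open>Along the directions \<open>v\<close> close to \<open>- lam\<close> all four quantities defining
  \<open>Gamma 2 lam\<close> lie between \<open>9 t / 10\<close> and \<open>11 t / 10\<close>.\<close>

lemma scaleR_cone_in_Gamma:
  assumes lam: "lam \<in> torus2" and t: "0 < t" "t \<le> 1"
    and v: "norm (fst v + fst lam) < 1/10" "norm (snd v + snd lam) < 1/10"
  shows "lam + t *\<^sub>R v \<in> Gamma 2 lam"
proof -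
  define z where "z = lam + t *\<^sub>R v"
  have z: "fst z = fst lam + of_real t * fst v" "snd z = snd lam + of_real t * snd v"
    by (simp_all add: z_def scaleR_conv_of_real)
  have l: "norm (fst lam) = 1" "norm (snd lam) = 1"
    using lam by (auto simp: torus2_def)
  define q where "q = [norm (fst z - fst lam), norm (snd z - snd lam), 1 - norm (fst z), 1 - norm (snd z)]"
  have bounds: "9/10 * t \<le> x \<and> x \<le> 11/10 * t" if "x \<in> set q" for x
  proof -
    have "9/10 * t \<le> t * norm (fst v)" "t * norm (fst v) \<le> 11/10 * t"
      "9/10 * t \<le> t * norm (snd v)" "t * norm (snd v) \<le> 11/10 * t"
      using norm_near_unit_bounds[OF l(1) v(1)] norm_near_unit_bounds[OF l(2) v(2)] t by auto
    then show ?thesis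
      using that t norm_add_scaled_bounds[OF l(1) _ _ v(1), of t] norm_add_scaled_bounds[OF l(2) _ _ v(2), of t]
      by (auto simp: q_def z norm_mult)
  qed
  have "\<forall>i<4. \<forall>j<4. 1 / 2 \<le> q ! i / q ! j \<and> q ! i / q ! j \<le> 2"
  proof (intro allI impI)
    fix i j :: nat assume "i < 4" "j < 4"
    moreover have "length q = 4"
      by (simp add: q_def)
    ultimately have "q ! i \<in> set q" "q ! j \<in> set q"
      by (simp_all add: nth_mem)
    then show "1 / 2 \<le> q ! i / q ! j \<and> q ! i / q ! j \<le> 2"
      using bounds[of "q ! i"] bounds[of "q ! j"] t by (auto simp: field_simps)
  qed
  moreover have "z \<in> bidisk"
    using bounds[of "1 - norm (fst z)"] bounds[of "1 - norm (snd z)"] t by (auto simp: bidisk_def q_def)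
  ultimately show ?thesis
    unfolding Gamma_def z_def[symmetric] q_def by (simp add: Let_def)
qed

lemma eventually_Gamma_imp_on_cone:
  assumes lam: "lam \<in> torus2" and ev: "eventually Q (at lam within Gamma 2 lam)"
  obtains \<delta> where "0 < \<delta>" "\<delta> \<le> 1" "\<And>t v. 0 < t \<Longrightarrow> t < \<delta> \<Longrightarrow> norm (fst v + fst lam) < 1/10 \<Longrightarrow>
      norm (snd v + snd lam) < 1/10 \<Longrightarrow> Q (lam + t *\<^sub>R v)"
proof -
  obtain d where d: "d > 0" and Q: "\<And>z. z \<in> Gamma 2 lam \<Longrightarrow> z \<noteq> lam \<Longrightarrow> dist z lam < d \<Longrightarrow> Q z"
    using ev unfolding eventually_at by blast
  show ?thesis
  proof
    show "0 < min 1 (d / 3)" "min 1 (d / 3) \<le> 1" using d by auto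
    fix t v
    assume t: "0 < t" "t < min 1 (d / 3)"
      and v: "norm (fst v + fst lam) < 1/10" "norm (snd v + snd lam) < 1/10"
    have l: "norm (fst lam) = 1" "norm (snd lam) = 1"
      using lam by (auto simp: torus2_def)
    have "0 < norm (fst v)" "norm v < 3"
      using norm_near_unit_bounds[OF l(1) v(1)] norm_near_unit_bounds[OF l(2) v(2)]
        norm_Pair_le[of "fst v" "snd v"] by auto
    moreover have "t * norm v < d"
    proof -
      have "t * norm v < t * 3"
        using t \<open>norm v < 3\<close> by (intro mult_strict_left_mono) auto
      then show ?thesis
        using t by linarith
    qed
    ultimately have "lam + t *\<^sub>R v \<noteq> lam" "dist (lam + t *\<^sub>R v) lam < d"
      using t by (auto simp: dist_norm)
    then show "Q (lam + t *\<^sub>R v)"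
      using t by (intro Q scaleR_cone_in_Gamma[OF lam _ _ v]) auto
  qed
qed

lemma homog_part_neq_0:
  assumes "vanishes_ge d S" "\<not> vanishes_ge (Suc d) S"
  shows "homog_part d S \<noteq> 0"
proof
  assume "homog_part d S = 0"
  then have "bcoeff S i j = 0" if "i + j = d" for i j
    using bcoeff_homog_part[of d S i j] that by simp
  then show False
    using assms by (auto simp: vanishes_ge_def less_Suc_eq)
qed

lemma exists_lowest_homog_part:
  "\<not> vanishes_ge (Suc N) S \<Longrightarrow> \<exists>d\<le>N. vanishes_ge d S \<and> homog_part d S \<noteq> 0"
proof (induction N)
  case 0
  then show ?case using homog_part_neq_0[of 0 S] by auto
next
  case (Suc N)
  show ?case
  proof (cases "vanishes_ge (Suc N) S")
    case True
    then show ?thesis using homog_part_neq_0 Suc.prems by blast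
  next
    case False
    then show ?thesis using Suc.IH le_SucI by blast
  qed
qed

lemma norm_homog_part_scaleR_le:
  assumes "vanishes_ge d S"
  obtains K where "0 \<le> K" "\<And>t v. 0 \<le> t \<Longrightarrow> norm (t *\<^sub>R v) \<le> 1 \<Longrightarrow>
    t ^ d * norm (eval2 (homog_part d S) v) \<le> norm (eval2 S (t *\<^sub>R v)) + K * norm (t *\<^sub>R v) ^ Suc d"
proof -
  obtain K where K: "0 \<le> K" "\<And>w. norm w \<le> 1 \<Longrightarrow> norm (eval2 (S - homog_part d S) w) \<le> K * norm w ^ Suc d"
    using norm_eval2_le_if_vanishes_ge[OF vanishes_ge_diff_homog_part[OF assms]] by blast
  show ?thesis
  proof (rule that[OF K(1)])
    fix t :: real and v :: "complex \<times> complex"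
    assume t: "0 \<le> t" "norm (t *\<^sub>R v) \<le> 1"
    have "t ^ d * norm (eval2 (homog_part d S) v) = norm (eval2 S (t *\<^sub>R v) - eval2 (S - homog_part d S) (t *\<^sub>R v))"
      using t(1) by (simp add: eval2_homog_part_scaleR norm_mult norm_power)
    also have "\<dots> \<le> norm (eval2 S (t *\<^sub>R v)) + K * norm (t *\<^sub>R v) ^ Suc d"
      using norm_triangle_ineq4 K(2)[OF t(2)] by (rule order.trans[OF _ add_left_mono])
    finally show "t ^ d * norm (eval2 (homog_part d S) v) \<le> norm (eval2 S (t *\<^sub>R v)) + K * norm (t *\<^sub>R v) ^ Suc d" .
  qed
qed

lemma nonpos_if_le_add_small:
  fixes h C :: real
  assumes "0 \<le> C" and small: "\<And>e. e > 0 \<Longrightarrow> \<exists>\<delta>>0. \<forall>t. 0 < t \<longrightarrow> t < \<delta> \<longrightarrow> h \<le> e + C * t"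
  shows "h \<le> 0"
proof (rule ccontr)
  assume "\<not> h \<le> 0"
  then obtain \<delta> where "\<delta> > 0" and \<delta>: "\<And>t. 0 < t \<Longrightarrow> t < \<delta> \<Longrightarrow> h \<le> h / 2 + C * t"
    using small[of "h / 2"] by auto
  define t where "t = min (\<delta> / 2) (h / (4 * (C + 1)))"
  have t: "0 < t" "t < \<delta>"
    using \<open>\<delta> > 0\<close> \<open>\<not> h \<le> 0\<close> assms(1) by (auto simp: t_def)
  have "C * t \<le> C * (h / (4 * (C + 1)))"
    using assms(1) by (intro mult_left_mono) (auto simp: t_def)
  also have "\<dots> < h / 2"
    using assms(1) \<open>\<not> h \<le> 0\<close> by (auto simp: field_simps intro!: add_pos_nonneg)
  finally show False
    using \<delta>[OF t] by linarith
qed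

text \<open>If a polynomial is \<open>o(|w|^N)\<close> as \<open>w\<close> tends to 0 along an open cone of directions, its
  lowest homogeneous part has degree greater than \<open>N\<close>: otherwise, by homogeneity, that part would
  vanish on an open set.\<close>

lemma vanishes_ge_if_small_on_cone:
  assumes "\<rho> > 0"
    and small: "\<And>e. e > 0 \<Longrightarrow> \<exists>\<delta>>0. \<forall>t v. 0 < t \<longrightarrow> t < \<delta> \<longrightarrow> norm (fst v - fst a) < \<rho> \<longrightarrow>
        norm (snd v - snd a) < \<rho> \<longrightarrow> norm (eval2 S (t *\<^sub>R v)) \<le> e * norm (t *\<^sub>R v) ^ N"
  shows "vanishes_ge (Suc N) S"
proof (rule ccontr)
  assume "\<not> vanishes_ge (Suc N) S"
  then obtain d where d: "d \<le> N" "vanishes_ge d S" "homog_part d S \<noteq> 0"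
    using exists_lowest_homog_part by blast
  then obtain v where v: "norm (fst v - fst a) < \<rho>" "norm (snd v - snd a) < \<rho>"
    and "eval2 (homog_part d S) v \<noteq> 0"
    using bipoly_eq_0_if_vanishes_on_box[OF \<open>\<rho> > 0\<close>, of "fst a" "snd a" "homog_part d S"] by blast
  obtain K where K: "0 \<le> K" "\<And>t v. 0 \<le> t \<Longrightarrow> norm (t *\<^sub>R v) \<le> 1 \<Longrightarrow>
      t ^ d * norm (eval2 (homog_part d S) v) \<le> norm (eval2 S (t *\<^sub>R v)) + K * norm (t *\<^sub>R v) ^ Suc d"
    using norm_homog_part_scaleR_le[OF d(2)] by blast
  have "norm (eval2 (homog_part d S) v) \<le> 0"
  proof (rule nonpos_if_le_add_small)
    show "0 \<le> K * norm v ^ Suc d" using K(1) by simp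
    fix e :: real assume "e > 0"
    then have "e / (norm v ^ N + 1) > 0"
      by (intro divide_pos_pos add_nonneg_pos) auto
    then obtain \<delta> where "\<delta> > 0" and \<delta>: "\<forall>t w. 0 < t \<longrightarrow> t < \<delta> \<longrightarrow> norm (fst w - fst a) < \<rho> \<longrightarrow>
        norm (snd w - snd a) < \<rho> \<longrightarrow> norm (eval2 S (t *\<^sub>R w)) \<le> e / (norm v ^ N + 1) * norm (t *\<^sub>R w) ^ N"
      using small by blast
    show "\<exists>\<delta>>0. \<forall>t. 0 < t \<longrightarrow> t < \<delta> \<longrightarrow>
        norm (eval2 (homog_part d S) v) \<le> e + K * norm v ^ Suc d * t"
    proof (intro exI[of _ "min \<delta> (1 / (norm v + 1))"] conjI allI impI)
      show "0 < min \<delta> (1 / (norm v + 1))"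
        using \<open>\<delta> > 0\<close> by (simp add: add_nonneg_pos)
      fix t assume t: "0 < t" "t < min \<delta> (1 / (norm v + 1))"
      have "0 < norm v + 1"
        by (simp add: add_nonneg_pos)
      then have "t * (norm v + 1) < 1"
        using t(2) pos_less_divide_eq[of "norm v + 1" t 1] by simp
      then have "t * norm v + t < 1"
        by (simp add: algebra_simps)
      moreover have "0 \<le> t * norm v"
        using t(1) by simp
      ultimately have t_le: "t \<le> 1" "t * norm v \<le> 1"
        using t(1) by linarith+
      have "t ^ N \<le> t ^ d"
        using t(1) t_le(1) d(1) by (intro power_decreasing) auto
      have "e / (norm v ^ N + 1) * (t * norm v) ^ N = e * t ^ N * (norm v ^ N / (norm v ^ N + 1))"
        by (simp add: power_mult_distrib)
      also have "\<dots> \<le> e * t ^ N * 1"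
        using \<open>e > 0\<close> t(1) by (intro mult_left_mono) (auto simp: divide_le_eq_1 add_nonneg_pos)
      also have "\<dots> \<le> t ^ d * e"
        using \<open>t ^ N \<le> t ^ d\<close> \<open>e > 0\<close> by simp
      finally have "e / (norm v ^ N + 1) * (t * norm v) ^ N \<le> t ^ d * e" .
      moreover have "t ^ d * norm (eval2 (homog_part d S) v) \<le>
          e / (norm v ^ N + 1) * (t * norm v) ^ N + K * (t * norm v) ^ Suc d"
        using K(2)[of t v] \<delta>[rule_format, of t v] t t_le v by simp
      ultimately have "t ^ d * norm (eval2 (homog_part d S) v) \<le> t ^ d * (e + K * norm v ^ Suc d * t)"
        by (simp add: algebra_simps power_mult_distrib)
      then show "norm (eval2 (homog_part d S) v) \<le> e + K * norm v ^ Suc d * t"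
        using t(1) by (simp add: mult_le_cancel_left_pos)
    qed
  qed
  then show False
    using \<open>eval2 (homog_part d S) v \<noteq> 0\<close> by simp
qed

section \<open>The Taylor remainder of a non-tangentially smooth quotient\<close>

lemma vanishes_ge_remainder:
  assumes P: "\<forall>z\<in>bidisk. eval2 P z \<noteq> 0" and lam: "lam \<in> torus2"
    and M: "vanishes_ge M (shift2 P lam)" and nt: "nt_Ck k (\<lambda>z. eval2 Q z / eval2 P z) lam"
  obtains L where "vanishes_ge (Suc (M + k)) (shift2 (Q - L * P) lam)"
proof -
  obtain a where a: "\<And>c e. c > 1 \<Longrightarrow> e > 0 \<Longrightarrow> \<forall>\<^sub>F z in at lam within Gamma c lam.
      norm (eval2 Q z / eval2 P z -
        (\<Sum>i\<le>k. \<Sum>j\<le>k - i. a i j * (fst z - fst lam) ^ i * (snd z - snd lam) ^ j))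
      \<le> e * norm (z - lam) ^ k"
    using nt unfolding nt_Ck_def by blast
  define L where
    "L = (\<Sum>i\<le>k. \<Sum>j\<le>k - i. smult [:a i j:] ([:[:- fst lam, 1:]:] ^ i * [:[:- snd lam:], 1:] ^ j))"
  have eval2_L: "eval2 L z = (\<Sum>i\<le>k. \<Sum>j\<le>k - i. a i j * (fst z - fst lam) ^ i * (snd z - snd lam) ^ j)"
    for z
    by (simp add: L_def eval2_linear mult.assoc)
  obtain K where K: "0 \<le> K" "\<And>w. norm w \<le> 1 \<Longrightarrow> norm (eval2 P (lam + w)) \<le> K * norm w ^ M"
    using norm_eval2_le_if_vanishes_ge[OF M] by (metis eval2_shift2)
  have "vanishes_ge (Suc (M + k)) (shift2 (Q - L * P) lam)"
  proof (rule vanishes_ge_if_small_on_cone[of "1/10" "- lam"])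
    fix e :: real assume "e > 0"
    then have "e / (K + 1) > 0"
      using K(1) by (intro divide_pos_pos add_nonneg_pos) auto
    then have "\<forall>\<^sub>F z in at lam within Gamma 2 lam.
        norm (eval2 Q z / eval2 P z - eval2 L z) \<le> e / (K + 1) * norm (z - lam) ^ k"
      unfolding eval2_L by (rule a[of 2, simplified])
    moreover have "\<forall>\<^sub>F z in at lam within Gamma 2 lam. z \<in> ball lam 1"
      using eventually_at_ball[of 1 lam "Gamma 2 lam"] by (rule eventually_mono) auto
    ultimately have "\<forall>\<^sub>F z in at lam within Gamma 2 lam.
        norm (eval2 Q z / eval2 P z - eval2 L z) \<le> e / (K + 1) * norm (z - lam) ^ k \<and> z \<in> ball lam 1"
      by (rule eventually_conj)
    then obtain \<delta> where "0 < \<delta>" "\<delta> \<le> 1" and \<delta>: "\<And>t v. 0 < t \<Longrightarrow> t < \<delta> \<Longrightarrow>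
        norm (fst v + fst lam) < 1/10 \<Longrightarrow> norm (snd v + snd lam) < 1/10 \<Longrightarrow>
        norm (eval2 Q (lam + t *\<^sub>R v) / eval2 P (lam + t *\<^sub>R v) - eval2 L (lam + t *\<^sub>R v))
          \<le> e / (K + 1) * norm (t *\<^sub>R v) ^ k \<and> lam + t *\<^sub>R v \<in> ball lam 1"
      by (rule eventually_Gamma_imp_on_cone[OF lam]) auto
    show "\<exists>\<delta>>0. \<forall>t v. 0 < t \<longrightarrow> t < \<delta> \<longrightarrow> norm (fst v - fst (- lam)) < 1/10 \<longrightarrow>
        norm (snd v - snd (- lam)) < 1/10 \<longrightarrow>
        norm (eval2 (shift2 (Q - L * P) lam) (t *\<^sub>R v)) \<le> e * norm (t *\<^sub>R v) ^ (M + k)"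
    proof (intro exI[of _ \<delta>] conjI allI impI)
      fix t :: real and v :: "complex \<times> complex"
      assume t: "0 < t" "t < \<delta>" and v: "norm (fst v - fst (- lam)) < 1/10" "norm (snd v - snd (- lam)) < 1/10"
      define w where "w = t *\<^sub>R v"
      have v': "norm (fst v + fst lam) < 1/10" "norm (snd v + snd lam) < 1/10"
        using v by simp_all
      have "lam + w \<in> bidisk"
        using scaleR_cone_in_Gamma[OF lam t(1) _ v'] t(2) \<open>\<delta> \<le> 1\<close> by (simp add: w_def Gamma_def)
      then have nz: "eval2 P (lam + w) \<noteq> 0"
        using P by blast
      have quot: "norm (eval2 Q (lam + w) / eval2 P (lam + w) - eval2 L (lam + w)) \<le> e / (K + 1) * norm w ^ k"
        and "norm w < 1"
        using \<delta>[OF t v'] by (auto simp: w_def dist_norm)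
      have "eval2 (shift2 (Q - L * P) lam) w =
          eval2 P (lam + w) * (eval2 Q (lam + w) / eval2 P (lam + w) - eval2 L (lam + w))"
        using nz by (simp add: eval2_shift2 field_simps)
      then have "norm (eval2 (shift2 (Q - L * P) lam) w) =
          norm (eval2 P (lam + w)) * norm (eval2 Q (lam + w) / eval2 P (lam + w) - eval2 L (lam + w))"
        by (simp add: norm_mult)
      also have "\<dots> \<le> (K * norm w ^ M) * (e / (K + 1) * norm w ^ k)"
        using K \<open>norm w < 1\<close> quot by (intro mult_mono) auto
      also have "\<dots> = e * (K / (K + 1)) * norm w ^ (M + k)"
        by (simp add: power_add)
      also have "\<dots> \<le> e * norm w ^ (M + k)"
        using \<open>e > 0\<close> K(1) by (intro mult_right_mono mult_left_le) auto
      finally show "norm (eval2 (shift2 (Q - L * P) lam) (t *\<^sub>R v)) \<le> e * norm (t *\<^sub>R v) ^ (M + k)"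
        by (simp add: w_def)
    qed (use \<open>0 < \<delta>\<close> in simp)
  qed simp
  then show ?thesis by (rule that)
qed

theorem corollary14p9:
  fixes p :: bipoly and lam :: "complex \<times> complex" and k M :: nat
  assumes "semi_stable p"
    and "lam \<in> torus2"
    and "nt_Ck k (\<lambda>z. eval2 (refl2 p) z / eval2 p z) lam"
    and "vanishes_to_order p lam M"
  shows "enat (M * (M + k + 1)) \<le> int_mult lam p (refl2 p)"
proof -
  have order_p: "vanishes_ge M (shift2 p lam)"
    using assms(4) by (rule vanishes_to_order_imp_vanishes_ge)
  moreover have "\<forall>z\<in>bidisk. eval2 p z \<noteq> 0"
    using assms(1) by (simp add: semi_stable_def)
  ultimately obtain L where order_R: "vanishes_ge (Suc (M + k)) (shift2 (refl2 p - L * p) lam)"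
    using vanishes_ge_remainder assms(2,3) by blast
  have "enat (M * (M + k + 1)) \<le> int_mult lam p (refl2 p - L * p)"
    using int_mult_ge_mult_orders[OF order_p order_R] by simp
  also have "\<dots> \<le> int_mult lam p (refl2 p)"
    by (rule int_mult_mono) (metis diff_add_cancel in_local_ideal_add_multiple)
  finally show ?thesis .
qed

end
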